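(* Let $(a(l))_{l\ge0}$ be generated by SGG with activation probability $p\in[0,1]$ on a connected graph from an initial state $a(0)\ne\bar a$, and let $E_l=\mathbb E\|a(l)-\bar a\|^2$. Define $\eta_l=\mathbb E\big[R_{SGG}(a(l-1);p)-R_{RG}(a(l-1))\big]$ and $\beta_l=\eta_l/E_{l-1}$ if $E_{l-1}>0$, $\beta_l=0$ otherwise. Then for all $l\ge1$: $\beta_l\ge0$, $$E_l\le\big(\lambda_2(\overline W)-\beta_l\big)E_{l-1},\qquad E_l\le \|a(0)-\bar a\|^2\prod_{i=1}^l\big(\lambda_2(\overline W)-\beta_i\big)\le\|a(0)-\bar a\|^2\Big(\lambda_2(\overline W)-\min_{1\le i\le l}\beta_i\Big)^l,$$ and for every $\epsilon\in(0,1)$, $$\Pr\Big(\tfrac{\|a(l)-\bar a\|}{\|a(0)-\bar a\|}\ge\epsilon\Big)\le\epsilon^{-2}\Big(\lambda_2(\overline W)-\min_{1\le i\le l}\beta_i\Big)^l .$$ Consequently, if $\rho_l:=\lambda_2(\overline W)-\min_{1\le i\le l}\beta_i>0$ and $l\ge \dfrac{3\log\epsilon^{-1}}{\log \rho_l^{-1}}$, then $\Pr\big(\|a(l)-\bar a\|/\|a(0)-\bar a\|\ge\epsilon\big)\le\epsilon$; i.e. the $\epsilon$-averaging time of SGG is at most $3\log\epsilon^{-1}/\log\big(\lambda_2(\overline W)-\min_i\beta_i\big)^{-1}$.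
   Context: Connected undirected graph on $\mathcal V=\{1,\dots,N\}$, $N\ge2$, neighbour sets $\mathcal N_s$ (excluding $s$). $\bar a$ is the vector with all entries $\frac1N\sum_s a_s(0)$. SGG step: node $s$ uniform on $\mathcal V$; each $t\in\mathcal N_s$ independently active with probability $p$; partner $t^*$ maximises $(a_s(l-1)-a_t(l-1))^2$ over active neighbours, or is uniform on $\mathcal N_s$ if none is active; then $a_s(l)=a_{t^*}(l)=\frac12(a_s(l-1)+a_{t^*}(l-1))$, others unchanged. $R_{RG}(x)=\frac1{2N}\sum_{s}\frac1{|\mathcal N_s|}\sum_{t\in\mathcal N_s}(x_s-x_t)^2$; $R_{SGG}(x;p)=\frac1{2N}\sum_{s}\Big[\sum_{\emptyset\ne A\subseteq\mathcal N_s}p^{|A|}(1-p)^{|\mathcal N_s|-|A|}\max_{t\in A}(x_s-x_t)^2+(1-p)^{|\mathcal N_s|}\frac1{|\mathcal N_s|}\sum_{t\in\mathcal N_s}(x_s-x_t)^2\Big]$. Randomised gossip matrix: for $(s,t)$ with $t\in\mathcal N_s$, $W_{st}=I-\frac12(e_s-e_t)(e_s-e_t)^T$ ($e_i$ standard basis vectors), and $\overline W=\frac1N\sum_{s=1}^N\frac1{|\mathcal N_s|}\sum_{t\in\mathcal N_s}W_{st}$ is the expected one-step update matrix of randomised gossip (node $s$ uniform, partner uniform in $\mathcal N_s$). $\lambda_2(\overline W)$ denotes the second largest eigenvalue of the symmetric matrix $\overline W$. *)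

theory Defs
  imports "HOL-Analysis.Analysis" "HOL-Probability.Probability"
          "HOL-Computational_Algebra.Polynomial"
begin

text \<open>Vertices: a finite type 'n (so V = UNIV, N = CARD('n)); states are vectors real^'n.
  The graph is given by a symmetric irreflexive adjacency relation E.\<close>

definition nbrs :: "('n \<Rightarrow> 'n \<Rightarrow> bool) \<Rightarrow> 'n \<Rightarrow> 'n set" where
  "nbrs E s = {t. E s t}"

definition connected_graph :: "('n::finite \<Rightarrow> 'n \<Rightarrow> bool) \<Rightarrow> bool" where
  "connected_graph E \<longleftrightarrow> (\<forall>s t. E s t \<longleftrightarrow> E t s) \<and> (\<forall>s. \<not> E s s) \<and> (\<forall>s t. E\<^sup>*\<^sup>* s t)"

definition avg_vec :: "real^'n \<Rightarrow> real^'n::finite" where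
  "avg_vec a = (\<chi> i. (\<Sum>j\<in>UNIV. a $ j) / real CARD('n))"

definition avg_upd :: "real^'n \<Rightarrow> 'n \<Rightarrow> 'n \<Rightarrow> real^'n" where
  "avg_upd x s t = (\<chi> i. if i = s \<or> i = t then (x $ s + x $ t) / 2 else x $ i)"

definition partner_pmf :: "('n::finite \<Rightarrow> 'n \<Rightarrow> bool) \<Rightarrow> real \<Rightarrow> real^'n \<Rightarrow> 'n \<Rightarrow> 'n pmf" where
  "partner_pmf E p x s =
     bind_pmf (Pi_pmf (nbrs E s) False (\<lambda>_. bernoulli_pmf p))
       (\<lambda>f. let A = {t \<in> nbrs E s. f t} in
            if A = {} then pmf_of_set (nbrs E s)
            else pmf_of_set {t \<in> A. \<forall>u\<in>A. (x $ s - x $ u)\<^sup>2 \<le> (x $ s - x $ t)\<^sup>2})"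

definition sgg_step :: "('n::finite \<Rightarrow> 'n \<Rightarrow> bool) \<Rightarrow> real \<Rightarrow> real^'n \<Rightarrow> (real^'n) pmf" where
  "sgg_step E p x = bind_pmf (pmf_of_set UNIV) (\<lambda>s. map_pmf (avg_upd x s) (partner_pmf E p x s))"

primrec sgg_dist :: "('n::finite \<Rightarrow> 'n \<Rightarrow> bool) \<Rightarrow> real \<Rightarrow> real^'n \<Rightarrow> nat \<Rightarrow> (real^'n) pmf" where
  "sgg_dist E p a0 0 = return_pmf a0"
| "sgg_dist E p a0 (Suc l) = bind_pmf (sgg_dist E p a0 l) (sgg_step E p)"

definition R_RG :: "('n::finite \<Rightarrow> 'n \<Rightarrow> bool) \<Rightarrow> real^'n \<Rightarrow> real" where
  "R_RG E x = 1 / (2 * real CARD('n)) *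
     (\<Sum>s\<in>UNIV. 1 / real (card (nbrs E s)) * (\<Sum>t\<in>nbrs E s. (x $ s - x $ t)\<^sup>2))"

definition R_SGG :: "('n::finite \<Rightarrow> 'n \<Rightarrow> bool) \<Rightarrow> real^'n \<Rightarrow> real \<Rightarrow> real" where
  "R_SGG E x p = 1 / (2 * real CARD('n)) *
     (\<Sum>s\<in>UNIV.
        (\<Sum>A\<in>Pow (nbrs E s) - {{}}.
            p ^ card A * (1 - p) ^ (card (nbrs E s) - card A) * Max ((\<lambda>t. (x $ s - x $ t)\<^sup>2) ` A))
        + (1 - p) ^ card (nbrs E s) * (1 / real (card (nbrs E s)) * (\<Sum>t\<in>nbrs E s. (x $ s - x $ t)\<^sup>2)))"

definition outer :: "real^'n \<Rightarrow> real^'n \<Rightarrow> real^'n^'n" where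
  "outer u v = (\<chi> i j. u $ i * v $ j)"

definition W_edge :: "'n::finite \<Rightarrow> 'n \<Rightarrow> real^'n^'n" where
  "W_edge s t = mat 1 - (1/2) *\<^sub>R outer (axis s 1 - axis t 1) (axis s 1 - axis t 1)"

definition W_bar :: "('n::finite \<Rightarrow> 'n \<Rightarrow> bool) \<Rightarrow> real^'n^'n" where
  "W_bar E = (1 / real CARD('n)) *\<^sub>R
     (\<Sum>s\<in>UNIV. (1 / real (card (nbrs E s))) *\<^sub>R (\<Sum>t\<in>nbrs E s. W_edge s t))"

text \<open>Characteristic polynomial det(X I - A) and the second largest eigenvalue,
  eigenvalues counted with (algebraic) multiplicity.\<close>
definition charpoly :: "real^'n^'n \<Rightarrow> real poly" where
  "charpoly A = det (\<chi> i j. (if i = j then [:0, 1:] else 0) - [:A $ i $ j:])"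

definition eigenvalues :: "real^'n^'n \<Rightarrow> real set" where
  "eigenvalues A = {\<mu>. poly (charpoly A) \<mu> = 0}"

definition lambda2 :: "real^'n^'n \<Rightarrow> real" where
  "lambda2 A = Max {\<mu> \<in> eigenvalues A.
      (\<Sum>\<nu>\<in>{\<nu> \<in> eigenvalues A. \<mu> \<le> \<nu>}. order \<nu> (charpoly A)) \<ge> 2}"

definition sgg_E :: "('n::finite \<Rightarrow> 'n \<Rightarrow> bool) \<Rightarrow> real \<Rightarrow> real^'n \<Rightarrow> nat \<Rightarrow> real" where
  "sgg_E E p a0 l = measure_pmf.expectation (sgg_dist E p a0 l) (\<lambda>x. (norm (x - avg_vec a0))\<^sup>2)"

definition sgg_eta :: "('n::finite \<Rightarrow> 'n \<Rightarrow> bool) \<Rightarrow> real \<Rightarrow> real^'n \<Rightarrow> nat \<Rightarrow> real" where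
  "sgg_eta E p a0 l = measure_pmf.expectation (sgg_dist E p a0 (l - 1)) (\<lambda>x. R_SGG E x p - R_RG E x)"

definition sgg_beta :: "('n::finite \<Rightarrow> 'n \<Rightarrow> bool) \<Rightarrow> real \<Rightarrow> real^'n \<Rightarrow> nat \<Rightarrow> real" where
  "sgg_beta E p a0 l = (if sgg_E E p a0 (l - 1) > 0 then sgg_eta E p a0 l / sgg_E E p a0 (l - 1) else 0)"

end

theory Submission
  imports Defs
begin

text \<open>One SGG step replaces a_s and a_t by their mean, which lowers |a - abar|^2 by
  (a_s - a_t)^2 / 2; averaging over the random node and partner, the conditional expectation of
  |a(l) - abar|^2 given a(l-1) = x is |x - abar|^2 - R_SGG(x; p). On the other hand
  x \<bullet> W x = |x|^2 - R_RG(x) for the randomised gossip matrix W, whose top eigenspace is spanned by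
  the constant vector (with eigenvalue 1, simple as the graph is connected). The spectral theorem
  therefore gives the Poincare inequality (1 - lambda2 W) |x - xbar|^2 \<le> R_RG(x), and xbar = abar
  along the whole process because averaging preserves the sum of the entries. Hence
  E_l \<le> lambda2 W E_(l-1) - eta_l, where eta_l \<ge> 0 because a greedily chosen partner is on average
  at least as far from a_s as a uniform one. Iterating gives the product bound, and Markov's
  inequality the tail bounds.\<close>

section \<open>Spectral theorem for real symmetric matrices\<close>

definition symmetric_matrix :: "real^'n^'n \<Rightarrow> bool" where
  "symmetric_matrix M \<longleftrightarrow> (\<forall>i j. M $ i $ j = M $ j $ i)"

lemma symmetric_matrix_inner_commute:
  assumes "symmetric_matrix M"
  shows "(M *v x) \<bullet> y = x \<bullet> (M *v y)"
proof -
  have "Finite_Cartesian_Product.transpose M = M"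
    using assms by (simp add: symmetric_matrix_def Finite_Cartesian_Product.transpose_def vec_eq_iff)
  then show ?thesis
    by (metis dot_lmul_matrix vector_transpose_matrix)
qed

lemma nonpos_if_linear_le_quadratic:
  fixes a c :: real
  assumes "\<And>t. t > 0 \<Longrightarrow> a * t \<le> c * t\<^sup>2"
  shows "a \<le> 0"
proof (rule ccontr)
  assume "\<not> a \<le> 0"
  define t where "t = a / (2 * (\<bar>c\<bar> + 1))"
  have "t > 0" using \<open>\<not> a \<le> 0\<close> unfolding t_def by (intro divide_pos_pos) auto
  have "c * t \<le> \<bar>c\<bar> * t" using \<open>t > 0\<close> by (simp add: mult_right_mono)
  also have "\<dots> < a"
  proof -
    have "0 \<le> a * \<bar>c\<bar>" using \<open>\<not> a \<le> 0\<close> by simp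
    then have "0 < a * \<bar>c\<bar> + a * 2" using \<open>\<not> a \<le> 0\<close> by linarith
    then show ?thesis by (simp add: t_def field_simps)
  qed
  finally have "c * t\<^sup>2 < a * t" using \<open>t > 0\<close> by (simp add: power2_eq_square)
  then show False using assms[OF \<open>t > 0\<close>] by simp
qed

lemma rayleigh_quotient_attains_max:
  fixes M :: "real^'n^'n"
  assumes "subspace U" and "U \<noteq> {0}"
  obtains v where "v \<in> U" "norm v = 1" "\<And>z. z \<in> U \<Longrightarrow> z \<bullet> (M *v z) \<le> (v \<bullet> (M *v v)) * (z \<bullet> z)"
proof -
  define S where "S = sphere 0 1 \<inter> U"
  have "compact S"
    unfolding S_def using assms(1) by (intro compact_Int_closed compact_sphere closed_subspace)
  obtain u where u: "u \<in> U" "u \<noteq> 0" using assms subspace_0 by blast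
  then have "u /\<^sub>R norm u \<in> S" using assms(1) by (auto simp: S_def subspace_scale)
  moreover have "continuous_on S (\<lambda>z. z \<bullet> (M *v z))"
    by (intro continuous_intros linear_continuous_on matrix_vector_mul_bounded_linear)
  ultimately obtain v where v: "v \<in> S" and vmax: "\<And>y. y \<in> S \<Longrightarrow> y \<bullet> (M *v y) \<le> v \<bullet> (M *v v)"
    using continuous_attains_sup[OF \<open>compact S\<close>] by blast
  show thesis
  proof (rule that)
    show "v \<in> U" "norm v = 1" using v by (auto simp: S_def)
    fix z assume "z \<in> U"
    show "z \<bullet> (M *v z) \<le> (v \<bullet> (M *v v)) * (z \<bullet> z)"
    proof (cases "z = 0")
      case False
      then have "z /\<^sub>R norm z \<in> S" using \<open>z \<in> U\<close> assms(1) by (auto simp: S_def subspace_scale)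
      moreover have "(z /\<^sub>R norm z) \<bullet> (M *v (z /\<^sub>R norm z)) = (z \<bullet> (M *v z)) / (norm z)\<^sup>2"
        by (simp add: matrix_vector_mult_scaleR power2_eq_square field_simps)
      ultimately have "(z \<bullet> (M *v z)) / (norm z)\<^sup>2 \<le> v \<bullet> (M *v v)"
        using vmax by metis
      then show ?thesis using False by (simp add: divide_le_eq dot_square_norm mult.commute)
    qed simp
  qed
qed

text \<open>Moving a maximiser v of the Rayleigh quotient by t w, where w = M v - (v \<bullet> M v) v,
  raises the quotient by 2 t (w \<bullet> w) to first order in t, so w = 0.\<close>
lemma rayleigh_maximiser_is_eigenvector:
  fixes M :: "real^'n^'n"
  assumes sym: "symmetric_matrix M" and U: "subspace U" and inv: "\<And>x. x \<in> U \<Longrightarrow> M *v x \<in> U"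
    and v: "v \<in> U" "norm v = 1"
    and max: "\<And>z. z \<in> U \<Longrightarrow> z \<bullet> (M *v z) \<le> (v \<bullet> (M *v v)) * (z \<bullet> z)"
  shows "M *v v = (v \<bullet> (M *v v)) *\<^sub>R v"
proof -
  define m where "m = v \<bullet> (M *v v)"
  define w where "w = M *v v - m *\<^sub>R v"
  have vv: "v \<bullet> v = 1" using v(2) by (simp add: dot_square_norm)
  have "w \<in> U" unfolding w_def using inv v(1) U by (simp add: subspace_diff subspace_scale)
  have vw: "v \<bullet> w = 0" by (simp add: w_def m_def inner_diff_right vv)
  have wMv: "w \<bullet> (M *v v) = w \<bullet> w"
    using vw by (simp add: w_def inner_diff_right inner_diff_left inner_commute)
  have "(w \<bullet> w) * t \<le> ((m * (w \<bullet> w) - w \<bullet> (M *v w)) / 2) * t\<^sup>2" if "t > 0" for t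
  proof -
    have "v + t *\<^sub>R w \<in> U" using v(1) \<open>w \<in> U\<close> U by (simp add: subspace_add subspace_scale)
    from max[OF this] show ?thesis
      using vw vv wMv symmetric_matrix_inner_commute[OF sym, of v w]
      by (simp add: matrix_vector_right_distrib matrix_vector_mult_scaleR inner_add_left
          inner_add_right inner_commute power2_eq_square algebra_simps m_def)
  qed
  then have "w \<bullet> w \<le> 0" by (rule nonpos_if_linear_le_quadratic)
  then have "w = 0" by (metis inner_ge_zero inner_eq_zero_iff order_antisym)
  then show ?thesis by (simp add: w_def m_def)
qed

lemma symmetric_matrix_eigenbasis_of_invariant_subspace:
  fixes M :: "real^'n^'n"
  assumes sym: "symmetric_matrix M"
  shows "subspace U \<Longrightarrow> (\<And>x. x \<in> U \<Longrightarrow> M *v x \<in> U) \<Longrightarrow>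
    \<exists>B \<subseteq> U. pairwise orthogonal B \<and> (\<forall>b\<in>B. norm b = 1 \<and> M *v b = (b \<bullet> (M *v b)) *\<^sub>R b)
        \<and> span B = U"
proof (induction "dim U" arbitrary: U rule: less_induct)
  case less
  show ?case
  proof (cases "U = {0}")
    case True
    then show ?thesis by auto
  next
    case False
    obtain v where v: "v \<in> U" "norm v = 1" "M *v v = (v \<bullet> (M *v v)) *\<^sub>R v"
      using rayleigh_quotient_attains_max[OF less.prems(1) False]
        rayleigh_maximiser_is_eigenvector[OF sym less.prems] by metis
    have vv: "v \<bullet> v = 1" using v(2) by (simp add: dot_square_norm)
    define U' where "U' = U \<inter> {y. orthogonal v y}"
    have "subspace U'"
      unfolding U'_def using subspace_inter[OF less.prems(1) subspace_orthogonal_to_vector[of v]]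
      by (simp add: Collect_conj_eq)
    moreover have "M *v x \<in> U'" if "x \<in> U'" for x
    proof -
      have "v \<bullet> (M *v x) = (v \<bullet> (M *v v)) * (v \<bullet> x)"
        by (metis v(3) symmetric_matrix_inner_commute[OF sym] inner_scaleR_left)
      then show ?thesis using that less.prems(2) by (auto simp: U'_def orthogonal_def)
    qed
    moreover have "dim U' < dim U"
    proof -
      have "v \<notin> U'" using vv by (auto simp: U'_def orthogonal_def)
      then have "U' \<subset> U" using v(1) by (auto simp: U'_def)
      then show ?thesis
        by (metis \<open>subspace U'\<close> dim_psubset less.prems(1) span_eq_iff)
    qed
    ultimately obtain B' where B': "B' \<subseteq> U'" "pairwise orthogonal B'"
        "\<forall>b\<in>B'. norm b = 1 \<and> M *v b = (b \<bullet> (M *v b)) *\<^sub>R b" "span B' = U'"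
      using less.hyps by blast
    have "insert v B' \<subseteq> U" using B'(1) v(1) by (auto simp: U'_def)
    moreover have "U \<subseteq> span (insert v B')"
    proof
      fix x assume "x \<in> U"
      then have "x - (v \<bullet> x) *\<^sub>R v \<in> span B'"
        using v(1) less.prems(1) vv B'(4)
        by (auto simp: U'_def orthogonal_def subspace_diff subspace_scale inner_diff_right)
      then show "x \<in> span (insert v B')"
        by (metis span_breakdown_eq)
    qed
    moreover have "span (insert v B') \<subseteq> U"
      using \<open>insert v B' \<subseteq> U\<close> less.prems(1) by (rule span_minimal)
    ultimately show ?thesis
      using B'(1-3) v by (intro exI[of _ "insert v B'"])
        (auto simp: pairwise_insert U'_def orthogonal_commute)
  qed
qed

lemma orthonormal_expansion:
  fixes v :: "'n::finite \<Rightarrow> real^'n"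
  assumes orth: "\<And>i j. v i \<bullet> v j = (if i = j then 1 else 0)"
  shows "y = (\<Sum>k\<in>UNIV. (v k \<bullet> y) *\<^sub>R v k)"
proof -
  have "inj v" using orth by (metis injI zero_neq_one)
  have "pairwise orthogonal (range v)"
    using orth by (auto simp: pairwise_def orthogonal_def)
  moreover have "0 \<notin> range v" using orth by (metis imageE inner_zero_left zero_neq_one)
  ultimately have "independent (range v)" by (rule pairwise_orthogonal_independent)
  moreover have "card (range v) = dim (UNIV :: (real^'n) set)"
    using \<open>inj v\<close> by (simp add: card_image)
  ultimately have span: "span (range v) = UNIV"
    using card_eq_dim[of "range v" UNIV] by auto
  define z where "z = y - (\<Sum>k\<in>UNIV. (v k \<bullet> y) *\<^sub>R v k)"
  have "v j \<bullet> (\<Sum>k\<in>UNIV. (v k \<bullet> y) *\<^sub>R v k) = v j \<bullet> y" for j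
    by (simp add: inner_sum_right orth if_distrib cong: if_cong)
  then have "v j \<bullet> z = 0" for j
    by (simp add: z_def inner_diff_right)
  then have "orthogonal z z"
    using orthogonal_to_span[of z "range v" z] span
    by (metis UNIV_I imageE orthogonal_commute orthogonal_def)
  then show ?thesis by (simp add: z_def orthogonal_def)
qed

locale orthonormal_eigenbasis =
  fixes M :: "real^'n::finite^'n" and v :: "'n \<Rightarrow> real^'n" and \<mu> :: "'n \<Rightarrow> real"
  assumes orthonormal: "v i \<bullet> v j = (if i = j then 1 else 0)"
    and eigenvector: "M *v v k = \<mu> k *\<^sub>R v k"

theorem symmetric_matrix_orthonormal_eigenbasis:
  fixes M :: "real^'n^'n"
  assumes "symmetric_matrix M"
  obtains v \<mu> where "orthonormal_eigenbasis M v \<mu>"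
proof -
  obtain B where B: "pairwise orthogonal B" "\<And>b. b \<in> B \<Longrightarrow> norm b = 1"
      "\<And>b. b \<in> B \<Longrightarrow> M *v b = (b \<bullet> (M *v b)) *\<^sub>R b" "span B = UNIV"
    using symmetric_matrix_eigenbasis_of_invariant_subspace[OF assms, of UNIV] by auto
  have "independent B" using B(1,2) pairwise_orthogonal_independent by force
  then have "finite B" "card B = CARD('n)"
    using independent_imp_finite dim_span_eq_card_independent[of B] B(4) by auto
  then obtain h where h: "bij_betw h (UNIV :: 'n set) B"
    using finite_same_card_bij[of "UNIV :: 'n set" B] by auto
  have "h i \<bullet> h j = (if i = j then 1 else 0)" for i j
    using B(1,2) h bij_betw_apply[OF h] bij_betw_imp_inj_on[OF h]
    by (auto simp: dot_square_norm pairwise_def orthogonal_def) (metis inj_eq)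
  moreover have "M *v h k = (h k \<bullet> (M *v h k)) *\<^sub>R h k" for k
    using B(3) bij_betw_apply[OF h] by blast
  ultimately show thesis
    by (intro that[of h "\<lambda>k. h k \<bullet> (M *v h k)"] orthonormal_eigenbasis.intro)
qed

lemma sum_pCons:
  "finite S \<Longrightarrow> (\<Sum>x\<in>S. [:c x, d x:]) = [:sum c S, sum d S:]"
  by (induction S rule: finite_induct) auto

lemma order_prod_linear_factors:
  fixes \<mu> :: "'a \<Rightarrow> real"
  shows "finite K \<Longrightarrow> order a (\<Prod>k\<in>K. [:- \<mu> k, 1:]) = card {k\<in>K. \<mu> k = a}"
proof (induction K rule: finite_induct)
  case empty
  then show ?case by (simp add: order_0I)
next
  case (insert x K)
  have "(\<Prod>k\<in>insert x K. [:- \<mu> k, 1:]) \<noteq> 0"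
    by (subst prod_zero_iff) (use insert.hyps in auto)
  then have "order a (\<Prod>k\<in>insert x K. [:- \<mu> k, 1:])
      = order a [:- \<mu> x, 1:] + order a (\<Prod>k\<in>K. [:- \<mu> k, 1:])"
    using insert.hyps order_mult[of "[:- \<mu> x, 1:]" "\<Prod>k\<in>K. [:- \<mu> k, 1:]" a]
    by (simp del: mult_pCons_left)
  moreover have "order a [:- \<mu> x, 1:] = (if \<mu> x = a then 1 else 0)"
    using order_power_n_n[of a 1] by (auto simp: order_0I)
  moreover have "{k\<in>insert x K. \<mu> k = a}
      = (if \<mu> x = a then insert x {k\<in>K. \<mu> k = a} else {k\<in>K. \<mu> k = a})"
    by auto
  ultimately show ?case
    using insert by (simp del: mult_pCons_left)
qed

context orthonormal_eigenbasis
begin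

lemma expansion: "y = (\<Sum>k\<in>UNIV. (v k \<bullet> y) *\<^sub>R v k)"
  by (rule orthonormal_expansion[OF orthonormal])

lemma mult_vec: "M *v y = (\<Sum>k\<in>UNIV. (\<mu> k * (v k \<bullet> y)) *\<^sub>R v k)"
  using arg_cong[OF expansion, of "(*v) M" y]
  by (simp add: vec.sum matrix_vector_mult_scaleR eigenvector mult.commute)

lemma quadratic_form: "y \<bullet> (M *v y) = (\<Sum>k\<in>UNIV. \<mu> k * (v k \<bullet> y)\<^sup>2)"
  by (simp add: mult_vec inner_sum_right power2_eq_square inner_commute algebra_simps)

lemma inner_self: "y \<bullet> y = (\<Sum>k\<in>UNIV. (v k \<bullet> y)\<^sup>2)"
  by (subst (2) expansion) (simp add: inner_sum_right power2_eq_square inner_commute)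

lemma eigenvalue_eq_quadratic_form: "\<mu> k = v k \<bullet> (M *v v k)"
  using orthonormal[of k k] by (simp add: eigenvector)

lemma matrix_entries:
  "(\<Sum>k\<in>UNIV. v k $ i * v k $ j) = (if i = j then 1 else 0)"
  "M $ i $ j = (\<Sum>k\<in>UNIV. \<mu> k * v k $ i * v k $ j)"
proof -
  have "axis j (1::real) $ i = (\<Sum>k\<in>UNIV. (v k \<bullet> axis j 1) *\<^sub>R v k) $ i"
    by (subst expansion) simp
  then have "axis j (1::real) $ i = (\<Sum>k\<in>UNIV. v k $ i * v k $ j)"
    by (simp add: inner_axis mult.commute)
  then show "(\<Sum>k\<in>UNIV. v k $ i * v k $ j) = (if i = j then 1 else 0)"
    by (simp add: axis_def)
  have "M $ i $ j = (M *v axis j 1) $ i"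
    by (simp add: matrix_vector_mult_def axis_def if_distrib cong: if_cong)
  then show "M $ i $ j = (\<Sum>k\<in>UNIV. \<mu> k * v k $ i * v k $ j)"
    by (simp add: mult_vec sum_component inner_axis mult.commute mult.left_commute)
qed

text \<open>Over polynomials, X I - M = P D P' with P the matrix whose columns are the eigenvectors,
  P' its transpose and D the diagonal of the factors X - \<mu> k; as P P' = I, det (X I - M) = det D.\<close>
lemma charpoly_eq: "charpoly M = (\<Prod>k\<in>UNIV. [:- \<mu> k, 1:])"
proof -
  define P :: "real poly^'n^'n" where "P = (\<chi> i k. [:v k $ i:])"
  define D :: "real poly^'n^'n" where "D = (\<chi> k l. if k = l then [:- \<mu> k, 1:] else 0)"
  define C :: "real poly^'n^'n" where "C = (\<chi> i j. (if i = j then [:0, 1:] else 0) - [:M $ i $ j:])"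
  let ?Pt = "Finite_Cartesian_Product.transpose P"
  have PD: "(P ** D) $ i $ l = [:v l $ i:] * [:- \<mu> l, 1:]" for i l
    by (simp add: matrix_matrix_mult_def P_def D_def if_distrib cong: if_cong)
  have "(P ** D ** ?Pt) $ i $ j = C $ i $ j" for i j
  proof -
    have "?Pt $ l $ j = [:v l $ j:]" for l
      by (simp add: Finite_Cartesian_Product.transpose_def P_def)
    then have "(P ** D ** ?Pt) $ i $ j = (\<Sum>l\<in>UNIV. [:- (\<mu> l * v l $ i * v l $ j), v l $ i * v l $ j:])"
      by (simp add: matrix_matrix_mult_def[of "P ** D"] PD mult_ac)
    also have "\<dots> = C $ i $ j"
      by (simp add: sum_pCons sum_negf matrix_entries C_def)
    finally show ?thesis .
  qed
  then have CP: "C = P ** D ** ?Pt" by (simp add: vec_eq_iff)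
  have "(P ** ?Pt) $ i $ j = mat 1 $ i $ j" for i j
    by (simp add: matrix_matrix_mult_def Finite_Cartesian_Product.transpose_def P_def
        mult.commute sum_to_poly matrix_entries mat_def)
  then have PPt: "P ** ?Pt = mat 1" by (simp add: vec_eq_iff)
  have "charpoly M = det P * det D * det ?Pt" by (simp add: charpoly_def C_def[symmetric] CP det_mul)
  also have "\<dots> = det D * det (P ** ?Pt)" by (simp add: det_mul)
  also have "\<dots> = det D" by (simp add: PPt)
  also have "\<dots> = (\<Prod>k\<in>UNIV. [:- \<mu> k, 1:])" by (subst det_diagonal) (auto simp: D_def)
  finally show ?thesis .
qed


lemma eigenvalues_eq: "eigenvalues M = range \<mu>"
  by (auto simp: eigenvalues_def charpoly_eq poly_prod)

lemma multiplicities_above: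
  "(\<Sum>\<nu>\<in>{\<nu> \<in> eigenvalues M. m \<le> \<nu>}. order \<nu> (charpoly M)) = card {k. m \<le> \<mu> k}"
proof -
  have "(\<Sum>\<nu>\<in>{\<nu> \<in> eigenvalues M. m \<le> \<nu>}. order \<nu> (charpoly M))
      = (\<Sum>\<nu>\<in>{\<nu> \<in> range \<mu>. m \<le> \<nu>}. card {k. \<mu> k = \<nu>})"
    by (simp add: eigenvalues_eq charpoly_eq order_prod_linear_factors)
  also have "\<dots> = card (\<Union>\<nu>\<in>{\<nu> \<in> range \<mu>. m \<le> \<nu>}. {k. \<mu> k = \<nu>})"
    by (rule card_UN_disjoint[symmetric]) auto
  also have "(\<Union>\<nu>\<in>{\<nu> \<in> range \<mu>. m \<le> \<nu>}. {k. \<mu> k = \<nu>}) = {k. m \<le> \<mu> k}"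
    by auto
  finally show ?thesis .
qed

lemma lambda2_eigenvalue_counts:
  assumes "CARD('n) \<ge> 2"
  shows "lambda2 M \<in> range \<mu>" and "2 \<le> card {k. lambda2 M \<le> \<mu> k}"
    and "card {k. lambda2 M < \<mu> k} \<le> 1"
proof -
  define S where "S = {m \<in> range \<mu>. 2 \<le> card {k. m \<le> \<mu> k}}"
  have l2: "lambda2 M = Max S"
    unfolding lambda2_def S_def multiplicities_above by (simp add: eigenvalues_eq)
  have "Min (range \<mu>) \<in> range \<mu>" by (rule Min_in) auto
  then obtain k0 where "\<mu> k0 = Min (range \<mu>)" by (metis imageE)
  then have "{k. \<mu> k0 \<le> \<mu> k} = UNIV" by auto
  then have "\<mu> k0 \<in> S"
    using assms by (simp add: S_def)
  then have "finite S" "S \<noteq> {}" by (auto simp: S_def)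
  then have "lambda2 M \<in> S" and upper: "\<And>m. m \<in> S \<Longrightarrow> m \<le> lambda2 M"
    by (simp_all add: l2)
  then show "lambda2 M \<in> range \<mu>" "2 \<le> card {k. lambda2 M \<le> \<mu> k}"
    by (simp_all add: S_def)
  show "card {k. lambda2 M < \<mu> k} \<le> 1"
  proof (rule ccontr)
    assume "\<not> ?thesis"
    then obtain k1 k2 where k: "k1 \<noteq> k2" "lambda2 M < \<mu> k1" "lambda2 M < \<mu> k2"
      using card_le_Suc0_iff_eq[of "{k. lambda2 M < \<mu> k}"] by auto
    define m where "m = min (\<mu> k1) (\<mu> k2)"
    have "card {k1, k2} \<le> card {k. m \<le> \<mu> k}" by (intro card_mono) (auto simp: m_def)
    then have "m \<in> S" using k(1) by (simp add: S_def m_def min_def)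
    then show False using upper[of m] k by (simp add: m_def)
  qed
qed

end

lemma lambda2_nonneg:
  fixes M :: "real^'n::finite^'n"
  assumes "symmetric_matrix M" and "CARD('n) \<ge> 2" and "\<And>z. 0 \<le> z \<bullet> (M *v z)"
  shows "0 \<le> lambda2 M"
proof -
  obtain v \<mu> where "orthonormal_eigenbasis M v \<mu>"
    using symmetric_matrix_orthonormal_eigenbasis[OF assms(1)] .
  then interpret orthonormal_eigenbasis M v \<mu> .
  obtain k where "lambda2 M = \<mu> k" using lambda2_eigenvalue_counts(1)[OF assms(2)] by auto
  then show ?thesis using assms(3)[of "v k"] by (simp add: eigenvalue_eq_quadratic_form)
qed

text \<open>The hypotheses make m a simple eigenvalue.\<close>
lemma lambda2_less_top_eigenvalue:
  fixes M :: "real^'n::finite^'n"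
  assumes "symmetric_matrix M" and "CARD('n) \<ge> 2"
    and le: "\<And>z. z \<bullet> (M *v z) \<le> m * (z \<bullet> z)"
    and line: "\<And>z. z \<bullet> (M *v z) = m * (z \<bullet> z) \<Longrightarrow> \<exists>c. z = c *\<^sub>R u"
  shows "lambda2 M < m"
proof (rule ccontr)
  assume "\<not> lambda2 M < m"
  obtain v \<mu> where "orthonormal_eigenbasis M v \<mu>"
    using symmetric_matrix_orthonormal_eigenbasis[OF assms(1)] .
  then interpret orthonormal_eigenbasis M v \<mu> .
  have le_m: "\<mu> k \<le> m" for k
    using le[of "v k"] orthonormal[of k k] by (simp add: eigenvalue_eq_quadratic_form)
  obtain k1 k2 where k: "k1 \<noteq> k2" "lambda2 M \<le> \<mu> k1" "lambda2 M \<le> \<mu> k2"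
    using lambda2_eigenvalue_counts(2)[OF assms(2)] card_le_Suc0_iff_eq[of "{k. lambda2 M \<le> \<mu> k}"] by auto
  have "\<exists>c. v k = c *\<^sub>R u" if "lambda2 M \<le> \<mu> k" for k
  proof (rule line)
    have "\<mu> k = m" using that le_m[of k] \<open>\<not> lambda2 M < m\<close> by linarith
    then show "v k \<bullet> (M *v v k) = m * (v k \<bullet> v k)"
      using orthonormal[of k k] by (simp add: eigenvalue_eq_quadratic_form)
  qed
  then obtain c1 c2 where "v k1 = c1 *\<^sub>R u" "v k2 = c2 *\<^sub>R u" using k by blast
  then have "c1 * c2 * (u \<bullet> u) = 0" "c1 * c1 * (u \<bullet> u) = 1" "c2 * c2 * (u \<bullet> u) = 1"
    using orthonormal[of k1 k2] orthonormal[of k1 k1] orthonormal[of k2 k2] k(1)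
    by (simp_all add: algebra_simps)
  then show False by auto
qed

lemma quadratic_form_le_lambda2:
  fixes M :: "real^'n::finite^'n"
  assumes "symmetric_matrix M" and "CARD('n) \<ge> 2"
    and le: "\<And>z. z \<bullet> (M *v z) \<le> m * (z \<bullet> z)"
    and u: "M *v u = m *\<^sub>R u" "u \<noteq> 0" and uy: "u \<bullet> y = 0"
  shows "y \<bullet> (M *v y) \<le> lambda2 M * (y \<bullet> y)"
proof -
  obtain v \<mu> where "orthonormal_eigenbasis M v \<mu>"
    using symmetric_matrix_orthonormal_eigenbasis[OF assms(1)] .
  then interpret orthonormal_eigenbasis M v \<mu> .
  have top_orthogonal: "v k \<bullet> y = 0" if k: "lambda2 M < \<mu> k" for k
  proof -
    have below: "\<mu> j \<le> lambda2 M" if "j \<noteq> k" for j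
    proof (rule ccontr)
      assume "\<not> \<mu> j \<le> lambda2 M"
      then have "card {j, k} \<le> card {k. lambda2 M < \<mu> k}" using k by (intro card_mono) auto
      then show False using lambda2_eigenvalue_counts(3)[OF assms(2)] \<open>j \<noteq> k\<close> by simp
    qed
    have "\<mu> k \<le> m"
      using le[of "v k"] orthonormal[of k k] by (simp add: eigenvalue_eq_quadratic_form)
    have "m * (v j \<bullet> u) = \<mu> j * (v j \<bullet> u)" for j
      using symmetric_matrix_inner_commute[OF assms(1), of "v j" u] by (auto simp: u eigenvector)
    then have "v j \<bullet> u = 0" if "j \<noteq> k" for j
      using below[OF that] k \<open>\<mu> k \<le> m\<close> by (metis mult_cancel_right not_le order.strict_trans2)
    then have "(\<Sum>j\<in>UNIV. (v j \<bullet> u) *\<^sub>R v j) = (v k \<bullet> u) *\<^sub>R v k"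
      by (subst sum.remove[of UNIV k]) (auto intro: sum.neutral)
    then have "u = (v k \<bullet> u) *\<^sub>R v k"
      using expansion[of u] by simp
    then have "(v k \<bullet> u) * (v k \<bullet> y) = 0" and "v k \<bullet> u \<noteq> 0"
      using uy u(2) by (metis inner_scaleR_left, metis scale_zero_left)
    then show ?thesis by simp
  qed
  have "y \<bullet> (M *v y) = (\<Sum>k\<in>UNIV. \<mu> k * (v k \<bullet> y)\<^sup>2)" by (rule quadratic_form)
  also have "\<dots> \<le> (\<Sum>k\<in>UNIV. lambda2 M * (v k \<bullet> y)\<^sup>2)"
    by (intro sum_mono) (metis top_orthogonal mult_right_mono not_le zero_le_power2 power2_eq_square order.refl mult_zero_right)
  also have "\<dots> = lambda2 M * (y \<bullet> y)" by (simp add: inner_self sum_distrib_left)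
  finally show ?thesis .
qed

section \<open>The randomised gossip matrix\<close>

lemma W_edge_mult_vec:
  "W_edge s t *v y = y - ((y $ s - y $ t) / 2) *\<^sub>R (axis s 1 - axis t 1)"
proof -
  let ?d = "axis s 1 - axis t (1::real)"
  have "(outer ?d ?d *v y) $ i = ?d $ i * (?d \<bullet> y)" for i
    by (simp add: outer_def matrix_vector_mult_def inner_vec_def sum_distrib_left mult.assoc)
  moreover have "?d \<bullet> y = y $ s - y $ t"
    by (simp add: inner_commute inner_diff_right inner_axis)
  ultimately have "outer ?d ?d *v y = (y $ s - y $ t) *\<^sub>R ?d"
    by (simp add: vec_eq_iff mult.commute)
  then show ?thesis
    by (simp add: W_edge_def matrix_vector_mult_diff_rdistrib scaleR_matrix_vector_assoc[symmetric])
qed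

lemma W_edge_quadratic_form:
  assumes "s \<noteq> t"
  shows "y \<bullet> (W_edge s t *v y) = y \<bullet> y - (y $ s - y $ t)\<^sup>2 / 2"
  using assms by (simp add: W_edge_mult_vec inner_diff_right inner_axis power2_eq_square)

lemma W_edge_quadratic_form_nonneg:
  assumes "s \<noteq> t"
  shows "0 \<le> y \<bullet> (W_edge s t *v y)"
proof -
  have "(y $ s)\<^sup>2 + (y $ t)\<^sup>2 = (\<Sum>i\<in>{s, t}. (y $ i)\<^sup>2)" using assms by simp
  also have "\<dots> \<le> (\<Sum>i\<in>UNIV. (y $ i)\<^sup>2)" by (rule sum_mono2) auto
  also have "\<dots> = y \<bullet> y" by (simp add: inner_vec_def power2_eq_square)
  finally have "(y $ s)\<^sup>2 + (y $ t)\<^sup>2 \<le> y \<bullet> y" .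
  moreover have "(y $ s)\<^sup>2 + (y $ t)\<^sup>2 = (y $ s - y $ t)\<^sup>2 / 2 + (y $ s + y $ t)\<^sup>2 / 2"
    by (simp add: power2_eq_square field_simps)
  ultimately have "(y $ s - y $ t)\<^sup>2 / 2 \<le> y \<bullet> y"
    using zero_le_power2[of "y $ s + y $ t"] by linarith
  then show ?thesis using assms by (simp add: W_edge_quadratic_form)
qed

lemma W_edge_mult_one: "W_edge s t *v 1 = 1"
  by (simp add: W_edge_mult_vec)

lemma symmetric_matrix_W_bar: "symmetric_matrix (W_bar E)"
proof -
  have W_edge_sym: "W_edge s t $ i $ j = W_edge s t $ j $ i" for s t i j :: "'n::finite"
    by (simp add: W_edge_def outer_def mat_def mult.commute)
  show ?thesis
    unfolding symmetric_matrix_def W_bar_def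
    by (simp add: sum_component W_edge_sym)
qed

lemma matrix_vector_mult_sum_left:
  fixes A :: "'a \<Rightarrow> real^'n^'m"
  shows "finite S \<Longrightarrow> (\<Sum>a\<in>S. A a) *v y = (\<Sum>a\<in>S. A a *v y)"
  by (induction S rule: finite_induct) (auto simp: matrix_vector_mult_add_rdistrib)

lemma W_bar_mult_vec:
  "W_bar E *v y = (1 / real CARD('n)) *\<^sub>R
     (\<Sum>s\<in>UNIV. (1 / real (card (nbrs E s))) *\<^sub>R (\<Sum>t\<in>nbrs E s. W_edge s t *v y))"
  for y :: "real^'n::finite"
  unfolding W_bar_def
  by (simp add: scaleR_matrix_vector_assoc[symmetric] matrix_vector_mult_sum_left nbrs_def)

lemma W_bar_quadratic_form:
  "y \<bullet> (W_bar E *v y) = (1 / real CARD('n)) *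
     (\<Sum>s\<in>UNIV. (1 / real (card (nbrs E s))) * (\<Sum>t\<in>nbrs E s. y \<bullet> (W_edge s t *v y)))"
  for y :: "real^'n::finite"
  by (simp add: W_bar_mult_vec inner_sum_right)

lemma W_bar_quadratic_form_nonneg:
  fixes E :: "'n::finite \<Rightarrow> 'n \<Rightarrow> bool"
  assumes "\<And>s. \<not> E s s"
  shows "0 \<le> y \<bullet> (W_bar E *v y)"
  unfolding W_bar_quadratic_form using assms
  by (intro mult_nonneg_nonneg sum_nonneg W_edge_quadratic_form_nonneg) (auto simp: nbrs_def)

lemma W_bar_quadratic_form_eq_R_RG:
  fixes E :: "'n::finite \<Rightarrow> 'n \<Rightarrow> bool"
  assumes irrefl: "\<And>s. \<not> E s s" and nbrs: "\<And>s. nbrs E s \<noteq> {}"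
  shows "y \<bullet> (W_bar E *v y) = y \<bullet> y - R_RG E y"
proof -
  define D where "D s = (1 / real (card (nbrs E s))) * (\<Sum>t\<in>nbrs E s. (y $ s - y $ t)\<^sup>2)" for s
  have "(1 / real (card (nbrs E s))) * (\<Sum>t\<in>nbrs E s. y \<bullet> (W_edge s t *v y)) = y \<bullet> y - D s / 2" for s
  proof -
    have "(\<Sum>t\<in>nbrs E s. y \<bullet> (W_edge s t *v y)) = (\<Sum>t\<in>nbrs E s. y \<bullet> y - (y $ s - y $ t)\<^sup>2 / 2)"
      using irrefl by (intro sum.cong refl W_edge_quadratic_form) (auto simp: nbrs_def)
    moreover have "card (nbrs E s) \<noteq> 0" using nbrs[of s] by (simp add: nbrs_def)
    ultimately show ?thesis
      by (simp add: D_def sum_subtractf sum_divide_distrib[symmetric] field_simps)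
  qed
  then have "y \<bullet> (W_bar E *v y) = (1 / real CARD('n)) * (\<Sum>s\<in>UNIV. y \<bullet> y - D s / 2)"
    by (simp add: W_bar_quadratic_form)
  also have "\<dots> = y \<bullet> y - R_RG E y"
    unfolding R_RG_def D_def[symmetric]
    by (simp add: sum_subtractf sum_divide_distrib[symmetric] field_simps)
  finally show ?thesis .
qed

lemma W_bar_mult_one:
  fixes E :: "'n::finite \<Rightarrow> 'n \<Rightarrow> bool"
  assumes "\<And>s. nbrs E s \<noteq> {}"
  shows "W_bar E *v 1 = 1"
proof -
  have "card (nbrs E s) \<noteq> 0" for s using assms[of s] by (simp add: nbrs_def)
  then have "(1 / real (card (nbrs E s))) *\<^sub>R (\<Sum>t\<in>nbrs E s. W_edge s t *v 1) = 1" for s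
    by (simp add: W_edge_mult_one sum_constant_scaleR del: sum_constant)
  then show ?thesis by (simp add: W_bar_mult_vec sum_constant_scaleR del: sum_constant)
qed

lemma R_RG_nonneg: "0 \<le> R_RG E y"
  unfolding R_RG_def by (intro mult_nonneg_nonneg sum_nonneg) auto

lemma R_RG_diff_constant:
  assumes "\<And>i j. c $ i = c $ j"
  shows "R_RG E (z - c) = R_RG E z"
proof -
  have d: "(z - c) $ s - (z - c) $ t = z $ s - z $ t" for s t using assms[of s t] by simp
  show ?thesis unfolding R_RG_def d ..
qed

lemma R_RG_eq_0_imp_constant:
  fixes E :: "'n::finite \<Rightarrow> 'n \<Rightarrow> bool"
  assumes conn: "connected_graph E" and nbrs: "\<And>s. nbrs E s \<noteq> {}" and "R_RG E y = 0"
  shows "y = y $ s0 *\<^sub>R 1"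
proof -
  have "(\<Sum>s\<in>UNIV. 1 / real (card (nbrs E s)) * (\<Sum>t\<in>nbrs E s. (y $ s - y $ t)\<^sup>2)) = 0"
    using \<open>R_RG E y = 0\<close> by (simp add: R_RG_def)
  then have "\<forall>s\<in>UNIV. 1 / real (card (nbrs E s)) * (\<Sum>t\<in>nbrs E s. (y $ s - y $ t)\<^sup>2) = 0"
    by (subst (asm) sum_nonneg_eq_0_iff) (auto intro!: divide_nonneg_nonneg sum_nonneg)
  moreover have "real (card (nbrs E s)) > 0" for s using nbrs[of s] by (simp add: nbrs_def card_gt_0_iff)
  ultimately have "(\<Sum>t\<in>nbrs E s. (y $ s - y $ t)\<^sup>2) = 0" for s
    by (simp add: less_imp_neq[symmetric]) (use nbrs in blast)
  then have "\<forall>t\<in>nbrs E s. (y $ s - y $ t)\<^sup>2 = 0" for s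
    by (subst (asm) sum_nonneg_eq_0_iff) auto
  then have edge: "E s t \<Longrightarrow> y $ s = y $ t" for s t by (simp add: nbrs_def)
  have reach: "E\<^sup>*\<^sup>* s0 t \<Longrightarrow> y $ s0 = y $ t" for t
    by (induction rule: rtranclp_induct) (auto dest: edge)
  have const: "y $ s0 = y $ t" for t
    by (rule reach) (use conn in \<open>simp add: connected_graph_def\<close>)
  show ?thesis
    unfolding vec_eq_iff
  proof
    show "y $ i = (y $ s0 *\<^sub>R 1) $ i" for i using const[of i] by simp
  qed
qed

lemma connected_graph_irrefl: "connected_graph E \<Longrightarrow> \<not> E s s"
  by (simp add: connected_graph_def)

lemma connected_graph_nbrs_nonempty:
  fixes E :: "'n::finite \<Rightarrow> 'n \<Rightarrow> bool"
  assumes conn: "connected_graph E" and "CARD('n) \<ge> 2"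
  shows "nbrs E s \<noteq> {}"
proof -
  have "\<not> (\<forall>a b :: 'n. a = b)"
    using assms(2) card_le_Suc0_iff_eq[of "UNIV :: 'n set"] by auto
  then obtain t :: 'n where "t \<noteq> s" by metis
  have "E\<^sup>*\<^sup>* s t" using conn by (simp add: connected_graph_def)
  then obtain u where "E s u" using \<open>t \<noteq> s\<close> by (cases rule: converse_rtranclpE) auto
  then show ?thesis by (auto simp: nbrs_def)
qed

context
  fixes E :: "'n::finite \<Rightarrow> 'n \<Rightarrow> bool"
  assumes conn: "connected_graph E" and card_ge_2: "CARD('n) \<ge> 2"
begin

lemma W_bar_quadratic_form_connected: "y \<bullet> (W_bar E *v y) = y \<bullet> y - R_RG E y"
  using connected_graph_irrefl[OF conn] connected_graph_nbrs_nonempty[OF conn card_ge_2]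
  by (rule W_bar_quadratic_form_eq_R_RG)

lemma lambda2_W_bar_nonneg: "0 \<le> lambda2 (W_bar E)"
  using conn by (intro lambda2_nonneg symmetric_matrix_W_bar card_ge_2 W_bar_quadratic_form_nonneg)
    (simp add: connected_graph_irrefl)

lemma W_bar_quadratic_form_le_inner: "y \<bullet> (W_bar E *v y) \<le> 1 * (y \<bullet> y)"
  using W_bar_quadratic_form_connected R_RG_nonneg[of E y] by simp

lemma lambda2_W_bar_less_1: "lambda2 (W_bar E) < 1"
proof (rule lambda2_less_top_eigenvalue[OF symmetric_matrix_W_bar card_ge_2 W_bar_quadratic_form_le_inner])
  fix z :: "real^'n" assume "z \<bullet> (W_bar E *v z) = 1 * (z \<bullet> z)"
  then have "R_RG E z = 0" using W_bar_quadratic_form_connected by simp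
  then show "\<exists>c. z = c *\<^sub>R 1"
    using R_RG_eq_0_imp_constant[OF conn connected_graph_nbrs_nonempty[OF conn card_ge_2]] by blast
qed

lemma W_bar_quadratic_form_le_lambda2:
  assumes "1 \<bullet> y = 0"
  shows "y \<bullet> (W_bar E *v y) \<le> lambda2 (W_bar E) * (y \<bullet> y)"
  by (rule quadratic_form_le_lambda2[OF symmetric_matrix_W_bar card_ge_2 W_bar_quadratic_form_le_inner
        _ _ assms])
    (simp_all add: W_bar_mult_one connected_graph_nbrs_nonempty[OF conn card_ge_2] vec_eq_iff)

lemma R_RG_poincare: "(1 - lambda2 (W_bar E)) * (norm (z - avg_vec z))\<^sup>2 \<le> R_RG E z"
proof -
  define y where "y = z - avg_vec z"
  have "1 \<bullet> y = 0" by (simp add: y_def avg_vec_def inner_vec_def sum_subtractf)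
  moreover have "R_RG E y = R_RG E z"
    unfolding y_def by (rule R_RG_diff_constant) (simp add: avg_vec_def)
  moreover have "y \<bullet> (W_bar E *v y) = y \<bullet> y - R_RG E y" by (rule W_bar_quadratic_form_connected)
  ultimately have "y \<bullet> y - R_RG E z \<le> lambda2 (W_bar E) * (y \<bullet> y)"
    using W_bar_quadratic_form_le_lambda2[of y] by simp
  moreover have "y \<bullet> y = (norm (z - avg_vec z))\<^sup>2" by (simp add: y_def dot_square_norm)
  ultimately show ?thesis by (simp add: algebra_simps)
qed

end

section \<open>The greedy partner\<close>

lemma sum_pmf_Pi_bernoulli:
  fixes N :: "'n::finite set" and h :: "('n \<Rightarrow> bool) \<Rightarrow> real"
  assumes p: "0 \<le> p" "p \<le> 1"
  shows "(\<Sum>F\<in>UNIV. pmf (Pi_pmf N False (\<lambda>_. bernoulli_pmf p)) F * h F)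
       = (\<Sum>A\<in>Pow N. p ^ card A * (1 - p) ^ (card N - card A) * h (\<lambda>x. x \<in> A))"
proof -
  define S where "S = {F :: 'n \<Rightarrow> bool. \<forall>x. x \<notin> N \<longrightarrow> \<not> F x}"
  have "(\<Sum>F\<in>UNIV. pmf (Pi_pmf N False (\<lambda>_. bernoulli_pmf p)) F * h F)
      = (\<Sum>F\<in>S. pmf (Pi_pmf N False (\<lambda>_. bernoulli_pmf p)) F * h F)"
    by (rule sum.mono_neutral_right) (auto simp: S_def pmf_Pi)
  also have "\<dots> = (\<Sum>A\<in>Pow N. p ^ card A * (1 - p) ^ (card N - card A) * h (\<lambda>x. x \<in> A))"
  proof (rule sum.reindex_bij_witness[of _ "\<lambda>A x. x \<in> A" "\<lambda>F. {x. F x}"])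
    fix F assume F: "F \<in> S"
    define A where "A = {x. F x}"
    have "A \<subseteq> N" using F by (auto simp: S_def A_def)
    have "pmf (Pi_pmf N False (\<lambda>_. bernoulli_pmf p)) F = (\<Prod>x\<in>N. if x \<in> A then p else 1 - p)"
      using F p by (auto simp: pmf_Pi S_def A_def intro!: prod.cong)
    also have "\<dots> = p ^ card A * (1 - p) ^ card (N - A)"
      by (simp add: prod.If_cases Int_absorb1[OF \<open>A \<subseteq> N\<close>] Diff_eq[symmetric])
    also have "card (N - A) = card N - card A"
      using \<open>A \<subseteq> N\<close> by (simp add: card_Diff_subset finite_subset)
    finally show "p ^ card {x. F x} * (1 - p) ^ (card N - card {x. F x}) * h (\<lambda>x. x \<in> {x. F x})
        = pmf (Pi_pmf N False (\<lambda>_. bernoulli_pmf p)) F * h F"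
      by (simp add: A_def)
  qed (auto simp: S_def)
  finally show ?thesis .
qed

lemma sum_subset_weights_eq_1:
  fixes N :: "'n::finite set" and p :: real
  assumes "0 \<le> p" "p \<le> 1"
  shows "(\<Sum>A\<in>Pow N. p ^ card A * (1 - p) ^ (card N - card A)) = 1"
  using sum_pmf_Pi_bernoulli[OF assms, of N "\<lambda>_. 1"] sum_pmf_eq_1[of UNIV "Pi_pmf N False (\<lambda>_. bernoulli_pmf p)"]
  by simp

lemma argmax_set_nonempty:
  fixes f :: "'a \<Rightarrow> real"
  assumes "finite A" "A \<noteq> {}"
  shows "{t \<in> A. \<forall>u\<in>A. f u \<le> f t} \<noteq> {}"
proof -
  have "Max (f ` A) \<in> f ` A" using assms by (intro Max_in) auto
  then obtain t where "t \<in> A" "f t = Max (f ` A)" by auto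
  then show ?thesis using assms(1) by auto
qed

lemma expectation_uniform_argmax:
  fixes f :: "'a \<Rightarrow> real"
  assumes "finite A" "A \<noteq> {}"
  shows "measure_pmf.expectation (pmf_of_set {t \<in> A. \<forall>u\<in>A. f u \<le> f t}) f = Max (f ` A)"
proof -
  let ?T = "{t \<in> A. \<forall>u\<in>A. f u \<le> f t}"
  have "f t = Max (f ` A)" if "t \<in> ?T" for t
    using that assms by (intro antisym Max_ge Max.boundedI) auto
  then have "sum f ?T = sum (\<lambda>_. Max (f ` A)) ?T" by (rule sum.cong[OF refl])
  then have "sum f ?T = real (card ?T) * Max (f ` A)" by simp
  moreover have "card ?T \<noteq> 0" using argmax_set_nonempty[OF assms] assms(1) by simp
  ultimately show ?thesis
    using argmax_set_nonempty[OF assms] assms(1) by (simp add: integral_pmf_of_set)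
qed

lemma set_pmf_partner_pmf:
  fixes E :: "'n::finite \<Rightarrow> 'n \<Rightarrow> bool"
  assumes "nbrs E s \<noteq> {}"
  shows "set_pmf (partner_pmf E p x s) \<subseteq> nbrs E s"
proof -
  have choice: "set_pmf (if A = {} then pmf_of_set (nbrs E s) else pmf_of_set {t \<in> A. \<forall>u\<in>A. f u \<le> f t})
      \<subseteq> nbrs E s" if "A \<subseteq> nbrs E s" for A and f :: "'n \<Rightarrow> real"
    using that assms argmax_set_nonempty[of A f] finite_subset[OF that] by auto
  show ?thesis
    unfolding partner_pmf_def Let_def set_bind_pmf by (intro UN_least choice) auto
qed

lemma expectation_partner_pmf:
  fixes E :: "'n::finite \<Rightarrow> 'n \<Rightarrow> bool"
  assumes nbrs: "nbrs E s \<noteq> {}" and p: "0 \<le> p" "p \<le> 1"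
  shows "measure_pmf.expectation (partner_pmf E p x s) (\<lambda>t. (x $ s - x $ t)\<^sup>2)
     = (\<Sum>A\<in>Pow (nbrs E s) - {{}}.
            p ^ card A * (1 - p) ^ (card (nbrs E s) - card A) * Max ((\<lambda>t. (x $ s - x $ t)\<^sup>2) ` A))
        + (1 - p) ^ card (nbrs E s) * (1 / real (card (nbrs E s)) * (\<Sum>t\<in>nbrs E s. (x $ s - x $ t)\<^sup>2))"
proof -
  define N where "N = nbrs E s"
  define f where "f t = (x $ s - x $ t)\<^sup>2" for t
  define g where "g F = (let A = {t \<in> N. F t} in
     if A = {} then pmf_of_set N else pmf_of_set {t \<in> A. \<forall>u\<in>A. f u \<le> f t})" for F
  define w where "w A = p ^ card A * (1 - p) ^ (card N - card A)" for A :: "'n set"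
  have "measure_pmf.expectation (partner_pmf E p x s) f
      = (\<Sum>F\<in>UNIV. pmf (Pi_pmf N False (\<lambda>_. bernoulli_pmf p)) F * measure_pmf.expectation (g F) f)"
    unfolding partner_pmf_def N_def[symmetric] f_def[symmetric] g_def[symmetric]
    by (subst pmf_expectation_bind) auto
  also have "\<dots> = (\<Sum>A\<in>Pow N. w A * measure_pmf.expectation (g (\<lambda>t. t \<in> A)) f)"
    unfolding w_def by (rule sum_pmf_Pi_bernoulli[OF p])
  also have "\<dots> = (\<Sum>A\<in>Pow N. w A * (if A = {} then sum f N / real (card N) else Max (f ` A)))"
  proof (intro sum.cong refl arg_cong2[where f = "(*)"])
    fix A assume "A \<in> Pow N"
    then have "{t \<in> N. t \<in> A} = A" by auto
    then show "measure_pmf.expectation (g (\<lambda>t. t \<in> A)) f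
        = (if A = {} then sum f N / real (card N) else Max (f ` A))"
      using nbrs by (simp add: g_def N_def integral_pmf_of_set expectation_uniform_argmax)
  qed
  also have "\<dots> = w {} * (sum f N / real (card N)) + (\<Sum>A\<in>Pow N - {{}}. w A * Max (f ` A))"
    by (subst sum.remove[of _ "{}"]) (auto intro!: sum.cong)
  finally show ?thesis by (simp add: w_def N_def f_def[abs_def] algebra_simps)
qed

text \<open>A weight on subsets that depends only on the cardinality is invariant under the
  transposition of two points of N, so every point of N receives the same total weight
  of the averages over the subsets containing it.\<close>
lemma sum_card_weighted_averages:
  fixes N :: "'a set" and w :: "'a set \<Rightarrow> real" and f :: "'a \<Rightarrow> real"
  assumes "finite N" and w: "\<And>A B. card A = card B \<Longrightarrow> w A = w B" and "t0 \<in> N"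
  defines "c \<equiv> \<lambda>t. \<Sum>A\<in>Pow N - {{}}. if t \<in> A then w A / real (card A) else 0"
  shows "(\<Sum>A\<in>Pow N - {{}}. w A * (sum f A / real (card A))) = c t0 * sum f N"
proof -
  let ?P = "Pow N - {{}}"
  have c_const: "c t = c t0" if "t \<in> N" for t
  proof -
    define \<sigma> where "\<sigma> = Transposition.transpose t t0"
    have inv: "\<sigma> ` \<sigma> ` A = A" for A
      by (simp add: image_comp \<sigma>_def transpose_comp_involutory)
    have "\<sigma> ` N = N" unfolding \<sigma>_def by (rule transpose_image_eq) (use that \<open>t0 \<in> N\<close> in auto)
    then have P: "\<sigma> ` A \<in> ?P" if "A \<in> ?P" for A using that by auto
    have card: "card (\<sigma> ` A) = card A" for A by (rule card_image) (simp add: \<sigma>_def)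
    have mem: "t0 \<in> \<sigma> ` A \<longleftrightarrow> t \<in> A" for A by (simp add: \<sigma>_def in_transpose_image_iff)
    show ?thesis
      unfolding c_def
    proof (intro sum.reindex_bij_witness[of _ "(`) \<sigma>" "(`) \<sigma>"] inv P)
      fix A
      show "(if t0 \<in> \<sigma> ` A then w (\<sigma> ` A) / real (card (\<sigma> ` A)) else 0)
          = (if t \<in> A then w A / real (card A) else 0)"
        using w[of "\<sigma> ` A" A] card[of A] mem[of A] by simp
    qed
  qed
  have "(\<Sum>A\<in>?P. w A * (sum f A / real (card A)))
      = (\<Sum>A\<in>?P. \<Sum>t\<in>N. (if t \<in> A then w A / real (card A) else 0) * f t)"
  proof (rule sum.cong[OF refl])
    fix A assume "A \<in> ?P"
    then have "sum f A = (\<Sum>t\<in>N. if t \<in> A then f t else 0)"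
      using \<open>finite N\<close> by (auto simp: sum.If_cases Int_absorb1)
    then show "w A * (sum f A / real (card A)) = (\<Sum>t\<in>N. (if t \<in> A then w A / real (card A) else 0) * f t)"
      by (simp add: sum_distrib_left sum_divide_distrib) (rule sum.cong[OF refl], simp)
  qed
  also have "\<dots> = (\<Sum>t\<in>N. c t * f t)"
    unfolding c_def by (subst sum.swap) (simp add: sum_distrib_right)
  also have "\<dots> = c t0 * sum f N"
    by (simp add: c_const sum_distrib_left)
  finally show ?thesis .
qed

text \<open>The greedy partner is at least as far as a uniform one: with A the random set of active
  neighbours, Max over A dominates the average over A, and by exchangeability the average over A
  has, on the event A nonempty, the same mean as the average over all of N.\<close>
lemma uniform_mean_le_greedy_mean:
  fixes N :: "'n::finite set" and f :: "'n \<Rightarrow> real" and p :: real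
  assumes "N \<noteq> {}" and p: "0 \<le> p" "p \<le> 1"
  shows "sum f N / real (card N) \<le>
     (\<Sum>A\<in>Pow N - {{}}. p ^ card A * (1 - p) ^ (card N - card A) * Max (f ` A))
       + (1 - p) ^ card N * (sum f N / real (card N))"
proof -
  define w where "w A = p ^ card A * (1 - p) ^ (card N - card A)" for A :: "'n set"
  let ?P = "Pow N - {{}}"
  obtain t0 where "t0 \<in> N" using assms(1) by auto
  define c where "c = (\<Sum>A\<in>?P. if t0 \<in> A then w A / real (card A) else 0)"
  have avg: "(\<Sum>A\<in>?P. w A * (sum g A / real (card A))) = c * sum g N" for g :: "'n \<Rightarrow> real"
    unfolding c_def by (rule sum_card_weighted_averages[OF _ _ \<open>t0 \<in> N\<close>]) (simp_all add: w_def)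
  have "(\<Sum>A\<in>?P. w A) = (\<Sum>A\<in>Pow N. w A) - w {}"
    by (simp add: sum_diff1)
  also have "(\<Sum>A\<in>Pow N. w A) = 1"
    unfolding w_def using p by (rule sum_subset_weights_eq_1)
  finally have "c * real (card N) = 1 - (1 - p) ^ card N"
    using avg[of "\<lambda>_. 1"] by (simp add: w_def)
  then have "c = (1 - (1 - p) ^ card N) / real (card N)"
    using assms(1) by (simp add: field_simps)
  then have c: "c * sum f N = (1 - (1 - p) ^ card N) * (sum f N / real (card N))"
    by simp
  have "c * sum f N \<le> (\<Sum>A\<in>?P. w A * Max (f ` A))"
    unfolding avg[symmetric]
  proof (rule sum_mono)
    fix A assume "A \<in> ?P"
    then have "A \<noteq> {}" "finite A" by auto
    then have "sum f A / real (card A) \<le> Max (f ` A)"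
      using sum_bounded_above[of A f "Max (f ` A)"] by (simp add: divide_le_eq mult.commute)
    then show "w A * (sum f A / real (card A)) \<le> w A * Max (f ` A)"
      using p by (intro mult_left_mono) (simp_all add: w_def)
  qed
  then show ?thesis using c by (simp add: w_def algebra_simps)
qed

lemma R_RG_le_R_SGG:
  fixes E :: "'n::finite \<Rightarrow> 'n \<Rightarrow> bool"
  assumes "\<And>s. nbrs E s \<noteq> {}" and "0 \<le> p" "p \<le> 1"
  shows "R_RG E x \<le> R_SGG E x p"
  unfolding R_RG_def R_SGG_def
  using uniform_mean_le_greedy_mean[OF assms] by (intro mult_left_mono sum_mono) simp_all

section \<open>One step of SGG\<close>

lemma inner_one_avg_upd: "1 \<bullet> avg_upd x s t = 1 \<bullet> x"
proof (cases "s = t")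
  case True
  then have "avg_upd x s t = x" by (simp add: avg_upd_def vec_eq_iff)
  then show ?thesis by simp
next
  case False
  have "(\<Sum>i\<in>UNIV. avg_upd x s t $ i) = (\<Sum>i\<in>UNIV. x $ i
      + ((if i = s then (x $ t - x $ s) / 2 else 0) + (if i = t then (x $ s - x $ t) / 2 else 0)))"
    by (rule sum.cong) (auto simp: avg_upd_def False field_simps)
  then show ?thesis using False by (simp add: inner_vec_def sum.distrib field_simps)
qed

lemma power2_norm_vec: "(norm z)\<^sup>2 = (\<Sum>i\<in>UNIV. (z $ i)\<^sup>2)" for z :: "real^'n::finite"
  unfolding dot_square_norm[symmetric] by (simp add: inner_vec_def power2_eq_square)

lemma norm_avg_upd_diff:
  fixes c :: "real^'n::finite"
  assumes "s \<noteq> t" and "c $ s = c $ t"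
  shows "(norm (avg_upd x s t - c))\<^sup>2 = (norm (x - c))\<^sup>2 - (x $ s - x $ t)\<^sup>2 / 2"
proof -
  define m where "m = (x $ s + x $ t) / 2"
  define ds where "ds = (m - c $ s)\<^sup>2 - (x $ s - c $ s)\<^sup>2"
  define dt where "dt = (m - c $ t)\<^sup>2 - (x $ t - c $ t)\<^sup>2"
  have "(\<Sum>i\<in>UNIV. ((avg_upd x s t - c) $ i)\<^sup>2)
      = (\<Sum>i\<in>UNIV. ((x - c) $ i)\<^sup>2 + ((if i = s then ds else 0) + (if i = t then dt else 0)))"
    by (rule sum.cong) (auto simp: avg_upd_def ds_def dt_def m_def \<open>s \<noteq> t\<close>)
  also have "\<dots> = (\<Sum>i\<in>UNIV. ((x - c) $ i)\<^sup>2) + ds + dt"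
    using assms(1) by (simp add: sum.distrib)
  finally have "(\<Sum>i\<in>UNIV. ((avg_upd x s t - c) $ i)\<^sup>2) = (\<Sum>i\<in>UNIV. ((x - c) $ i)\<^sup>2) + ds + dt" .
  moreover have "ds + dt = - (x $ s - x $ t)\<^sup>2 / 2"
    unfolding ds_def dt_def m_def assms(2) by (simp add: power2_eq_square field_simps)
  ultimately show ?thesis by (simp add: power2_norm_vec)
qed

lemma expectation_sgg_step:
  fixes E :: "'n::finite \<Rightarrow> 'n \<Rightarrow> bool" and c :: "real^'n"
  assumes irrefl: "\<And>s. \<not> E s s" and nbrs: "\<And>s. nbrs E s \<noteq> {}" and p: "0 \<le> p" "p \<le> 1"
    and c: "\<And>i j. c $ i = c $ j"
  shows "measure_pmf.expectation (sgg_step E p x) (\<lambda>z. (norm (z - c))\<^sup>2)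
       = (norm (x - c))\<^sup>2 - R_SGG E x p"
proof -
  let ?e = "\<lambda>z. (norm (z - c))\<^sup>2"
  define G where "G s = measure_pmf.expectation (partner_pmf E p x s) (\<lambda>t. (x $ s - x $ t)\<^sup>2)" for s
  have partner: "measure_pmf.expectation (map_pmf (avg_upd x s) (partner_pmf E p x s)) ?e
      = ?e x - G s / 2" for s
  proof -
    have "AE t in partner_pmf E p x s. ?e (avg_upd x s t) = ?e x - (x $ s - x $ t)\<^sup>2 / 2"
    proof (rule AE_pmfI)
      fix t assume "t \<in> set_pmf (partner_pmf E p x s)"
      then have "s \<noteq> t" using set_pmf_partner_pmf[OF nbrs, of p x s] irrefl[of s] by (auto simp: nbrs_def)
      then show "?e (avg_upd x s t) = ?e x - (x $ s - x $ t)\<^sup>2 / 2"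
        using c by (rule norm_avg_upd_diff)
    qed
    then have "measure_pmf.expectation (partner_pmf E p x s) (\<lambda>t. ?e (avg_upd x s t))
        = measure_pmf.expectation (partner_pmf E p x s) (\<lambda>t. ?e x - (x $ s - x $ t)\<^sup>2 / 2)"
      by (intro integral_cong_AE) simp_all
    then show ?thesis
      by (simp add: G_def integrable_measure_pmf_finite)
  qed
  have "measure_pmf.expectation (sgg_step E p x) ?e
      = (\<Sum>s\<in>UNIV. measure_pmf.expectation (map_pmf (avg_upd x s) (partner_pmf E p x s)) ?e
          /\<^sub>R real (card (UNIV :: 'n set)))"
    unfolding sgg_step_def by (rule pmf_expectation_bind_pmf_of_set) auto
  also have "\<dots> = (\<Sum>s\<in>UNIV. (?e x - G s / 2) / real CARD('n))"
    by (rule sum.cong[OF refl]) (simp only: partner, simp add: field_simps)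
  also have "\<dots> = ?e x - (\<Sum>s\<in>UNIV. G s / (2 * real CARD('n)))"
    by (simp add: diff_divide_distrib sum_subtractf sum_divide_distrib[symmetric])
  also have "(\<Sum>s\<in>UNIV. G s / (2 * real CARD('n))) = R_SGG E x p"
    unfolding R_SGG_def G_def expectation_partner_pmf[OF nbrs p] by (simp add: sum_divide_distrib)
  finally show ?thesis .
qed

lemma expectation_finite_support:
  fixes f :: "'a \<Rightarrow> real"
  assumes "finite (set_pmf M)"
  shows "measure_pmf.expectation M f = (\<Sum>z\<in>set_pmf M. pmf M z * f z)"
  by (subst integral_measure_pmf_real[OF assms]) (auto simp: mult.commute)

lemma set_pmf_sgg_step: "set_pmf (sgg_step E p x) \<subseteq> range (case_prod (avg_upd x))"
  unfolding sgg_step_def by (auto simp: set_bind_pmf)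

lemma finite_set_pmf_sgg_step: "finite (set_pmf (sgg_step E p (x :: real^'n::finite)))"
  by (rule finite_subset[OF set_pmf_sgg_step]) simp

lemma sgg_dist_support:
  "finite (set_pmf (sgg_dist E p a0 l)) \<and> (\<forall>z\<in>set_pmf (sgg_dist E p a0 l). 1 \<bullet> z = 1 \<bullet> a0)"
proof (induction l)
  case (Suc l)
  have "1 \<bullet> z = 1 \<bullet> x" if "z \<in> set_pmf (sgg_step E p x)" for x z
    using that set_pmf_sgg_step inner_one_avg_upd by fastforce
  then show ?case
    using Suc finite_set_pmf_sgg_step by (fastforce simp: set_bind_pmf)
qed simp

lemma finite_set_pmf_sgg_dist: "finite (set_pmf (sgg_dist E p a0 l))"
  using sgg_dist_support by blast

lemma avg_vec_sgg_dist: "z \<in> set_pmf (sgg_dist E p a0 l) \<Longrightarrow> avg_vec z = avg_vec a0"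
  using sgg_dist_support[of E p a0 l] by (simp add: avg_vec_def inner_vec_def)

section \<open>Contraction of the mean square deviation\<close>

lemma prod_le_power_Min:
  fixes b :: "nat \<Rightarrow> real"
  assumes "\<And>i. i \<in> {1..l} \<Longrightarrow> 0 \<le> L - b i"
  shows "(\<Prod>i=1..l. L - b i) \<le> (L - Min (b ` {1..l})) ^ l"
proof -
  have "(\<Prod>i=1..l. L - b i) \<le> (\<Prod>i=1..l. L - Min (b ` {1..l}))"
    using assms by (intro prod_mono) (auto intro: Min_le)
  then show ?thesis by simp
qed

lemma measure_pmf_ratio_ge_le:
  fixes c :: "'a::real_normed_vector"
  assumes "finite (set_pmf M)" and "0 < r" "0 < \<epsilon>"
  shows "measure_pmf.prob M {x. \<epsilon> \<le> norm (x - c) / r}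
    \<le> measure_pmf.expectation M (\<lambda>x. (norm (x - c))\<^sup>2) / (\<epsilon>\<^sup>2 * r\<^sup>2)"
proof -
  have "{x. \<epsilon> \<le> norm (x - c) / r} = {x \<in> space M. (\<epsilon> * r)\<^sup>2 \<le> (norm (x - c))\<^sup>2}"
    using assms(2,3) by (auto simp: le_divide_eq mult.commute abs_le_square_iff[symmetric])
  also have "measure_pmf.prob M \<dots> \<le> measure_pmf.expectation M (\<lambda>x. (norm (x - c))\<^sup>2) / (\<epsilon> * r)\<^sup>2"
    using assms by (intro integral_Markov_inequality_measure) (auto intro: integrable_measure_pmf_finite)
  finally show ?thesis by (simp add: power_mult_distrib)
qed

lemma power_div_square_le_if_time_ge:
  fixes \<epsilon> \<rho> :: real
  assumes "0 < \<epsilon>" "\<epsilon> < 1" "0 < \<rho>" "\<rho> < 1" and "3 * ln (1 / \<epsilon>) / ln (1 / \<rho>) \<le> real l"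
  shows "\<rho> ^ l / \<epsilon>\<^sup>2 \<le> \<epsilon>"
proof -
  have "0 < ln (1 / \<rho>)" using assms(3,4) by simp
  then have "3 * ln (1 / \<epsilon>) \<le> real l * ln (1 / \<rho>)" using assms(5) by (simp add: pos_divide_le_eq)
  then have "ln (\<rho> ^ l) \<le> ln (\<epsilon> ^ 3)"
    using assms(1,3) by (simp add: ln_div ln_realpow)
  then have "\<rho> ^ l \<le> \<epsilon> ^ 3" using assms(1,3) by simp
  then show ?thesis using assms(1) by (simp add: divide_le_eq power2_eq_square power3_eq_cube)
qed

context
  fixes E :: "'n::finite \<Rightarrow> 'n \<Rightarrow> bool" and p :: real and a0 :: "real^'n"
  assumes conn: "connected_graph E" and card_ge_2: "CARD('n) \<ge> 2" and p: "0 \<le> p" "p \<le> 1"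
begin

lemma sgg_E_nonneg: "0 \<le> sgg_E E p a0 l"
  unfolding sgg_E_def by simp

lemma sgg_eta_Suc_nonneg: "0 \<le> sgg_eta E p a0 (Suc l)"
  unfolding sgg_eta_def
  using R_RG_le_R_SGG[OF connected_graph_nbrs_nonempty[OF conn card_ge_2] p]
  by (simp add: expectation_finite_support[OF finite_set_pmf_sgg_dist] sum_nonneg)

lemma sgg_E_Suc_le: "sgg_E E p a0 (Suc l) \<le> lambda2 (W_bar E) * sgg_E E p a0 l - sgg_eta E p a0 (Suc l)"
proof -
  let ?M = "sgg_dist E p a0 l" and ?e = "\<lambda>z. (norm (z - avg_vec a0))\<^sup>2"
  have "sgg_E E p a0 (Suc l) = (\<Sum>z\<in>set_pmf ?M. pmf ?M z * (?e z - R_SGG E z p))"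
    unfolding sgg_E_def sgg_dist.simps
    by (subst pmf_expectation_bind[OF finite_set_pmf_sgg_dist finite_set_pmf_sgg_step order.refl])
      (simp add: expectation_sgg_step connected_graph_irrefl[OF conn]
        connected_graph_nbrs_nonempty[OF conn card_ge_2] p avg_vec_def)
  also have "\<dots> = (\<Sum>z\<in>set_pmf ?M. pmf ?M z * (?e z - R_RG E z))
      - (\<Sum>z\<in>set_pmf ?M. pmf ?M z * (R_SGG E z p - R_RG E z))"
    by (simp add: sum_subtractf[symmetric] algebra_simps)
  also have "\<dots> \<le> (\<Sum>z\<in>set_pmf ?M. pmf ?M z * (lambda2 (W_bar E) * ?e z))
      - (\<Sum>z\<in>set_pmf ?M. pmf ?M z * (R_SGG E z p - R_RG E z))"
  proof (intro diff_right_mono sum_mono mult_left_mono)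
    fix z assume "z \<in> set_pmf ?M"
    then show "?e z - R_RG E z \<le> lambda2 (W_bar E) * ?e z"
      using R_RG_poincare[OF conn card_ge_2, of z] avg_vec_sgg_dist[of z] by (simp add: algebra_simps)
  qed simp
  also have "\<dots> = lambda2 (W_bar E) * sgg_E E p a0 l - sgg_eta E p a0 (Suc l)"
    by (simp add: sgg_E_def sgg_eta_def expectation_finite_support[OF finite_set_pmf_sgg_dist]
        sum_distrib_left algebra_simps)
  finally show ?thesis .
qed

lemma sgg_beta_Suc:
  shows sgg_beta_Suc_nonneg: "0 \<le> sgg_beta E p a0 (Suc k)"
    and sgg_E_Suc_le_contraction:
      "sgg_E E p a0 (Suc k) \<le> (lambda2 (W_bar E) - sgg_beta E p a0 (Suc k)) * sgg_E E p a0 k"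
    and sgg_contraction_nonneg: "0 \<le> lambda2 (W_bar E) - sgg_beta E p a0 (Suc k)"
proof -
  note E = sgg_E_nonneg[of k] sgg_E_nonneg[of "Suc k"]
  show "0 \<le> sgg_beta E p a0 (Suc k)"
    using sgg_eta_Suc_nonneg[of k] E by (simp add: sgg_beta_def)
  show le: "sgg_E E p a0 (Suc k) \<le> (lambda2 (W_bar E) - sgg_beta E p a0 (Suc k)) * sgg_E E p a0 k"
  proof (cases "sgg_E E p a0 k = 0")
    case True
    then show ?thesis using sgg_E_Suc_le[of k] sgg_eta_Suc_nonneg[of k] by (simp add: sgg_beta_def)
  next
    case False
    then have "(lambda2 (W_bar E) - sgg_beta E p a0 (Suc k)) * sgg_E E p a0 k
        = lambda2 (W_bar E) * sgg_E E p a0 k - sgg_eta E p a0 (Suc k)"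
      using E by (simp add: sgg_beta_def field_simps)
    then show ?thesis using sgg_E_Suc_le[of k] by simp
  qed
  show "0 \<le> lambda2 (W_bar E) - sgg_beta E p a0 (Suc k)"
  proof (cases "sgg_E E p a0 k = 0")
    case False
    then have "0 < sgg_E E p a0 k" using E(1) by simp
    moreover have "0 \<le> (lambda2 (W_bar E) - sgg_beta E p a0 (Suc k)) * sgg_E E p a0 k"
      using le E(2) by linarith
    ultimately show ?thesis by (simp add: zero_le_mult_iff)
  qed (simp add: sgg_beta_def lambda2_W_bar_nonneg[OF conn card_ge_2])
qed

lemma sgg_E_le_prod:
  "sgg_E E p a0 l \<le> (norm (a0 - avg_vec a0))\<^sup>2 * (\<Prod>i=1..l. lambda2 (W_bar E) - sgg_beta E p a0 i)"
proof (induction l)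
  case 0
  then show ?case by (simp add: sgg_E_def)
next
  case (Suc l)
  have "sgg_E E p a0 (Suc l) \<le> (lambda2 (W_bar E) - sgg_beta E p a0 (Suc l)) * sgg_E E p a0 l"
    by (rule sgg_E_Suc_le_contraction)
  also have "\<dots> \<le> (lambda2 (W_bar E) - sgg_beta E p a0 (Suc l))
      * ((norm (a0 - avg_vec a0))\<^sup>2 * (\<Prod>i=1..l. lambda2 (W_bar E) - sgg_beta E p a0 i))"
    using Suc.IH sgg_contraction_nonneg by (rule mult_left_mono)
  finally show ?case by (simp add: algebra_simps)
qed

lemma sgg_beta_nonneg: "1 \<le> l \<Longrightarrow> 0 \<le> sgg_beta E p a0 l"
  using sgg_beta_Suc_nonneg[of "l - 1"] by simp

lemma sgg_E_le_contraction:
  "1 \<le> l \<Longrightarrow> sgg_E E p a0 l \<le> (lambda2 (W_bar E) - sgg_beta E p a0 l) * sgg_E E p a0 (l - 1)"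
  using sgg_E_Suc_le_contraction[of "l - 1"] by simp

lemma sgg_prod_le_power:
  "(norm (a0 - avg_vec a0))\<^sup>2 * (\<Prod>i=1..l. lambda2 (W_bar E) - sgg_beta E p a0 i)
    \<le> (norm (a0 - avg_vec a0))\<^sup>2 * (lambda2 (W_bar E) - Min (sgg_beta E p a0 ` {1..l})) ^ l"
proof -
  have "0 \<le> lambda2 (W_bar E) - sgg_beta E p a0 i" if "i \<in> {1..l}" for i
    using that sgg_contraction_nonneg[of "i - 1"] by simp
  then show ?thesis by (intro mult_left_mono prod_le_power_Min) simp_all
qed

lemma sgg_E_le_power:
  "sgg_E E p a0 l \<le> (norm (a0 - avg_vec a0))\<^sup>2 * (lambda2 (W_bar E) - Min (sgg_beta E p a0 ` {1..l})) ^ l"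
  using sgg_E_le_prod sgg_prod_le_power by (rule order.trans)

lemma sgg_tail_bound:
  assumes "a0 \<noteq> avg_vec a0" and "0 < \<epsilon>"
  shows "measure_pmf.prob (sgg_dist E p a0 l) {x. \<epsilon> \<le> norm (x - avg_vec a0) / norm (a0 - avg_vec a0)}
    \<le> (lambda2 (W_bar E) - Min (sgg_beta E p a0 ` {1..l})) ^ l / \<epsilon>\<^sup>2"
proof -
  define r where "r = norm (a0 - avg_vec a0)"
  define \<rho> where "\<rho> = lambda2 (W_bar E) - Min (sgg_beta E p a0 ` {1..l})"
  have r: "0 < r" using assms(1) by (simp add: r_def)
  have "measure_pmf.prob (sgg_dist E p a0 l) {x. \<epsilon> \<le> norm (x - avg_vec a0) / r}
      \<le> sgg_E E p a0 l / (\<epsilon>\<^sup>2 * r\<^sup>2)"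
    unfolding sgg_E_def by (rule measure_pmf_ratio_ge_le[OF finite_set_pmf_sgg_dist r assms(2)])
  also have "\<dots> \<le> r\<^sup>2 * \<rho> ^ l / (\<epsilon>\<^sup>2 * r\<^sup>2)"
    using sgg_E_le_power by (intro divide_right_mono) (simp_all add: r_def \<rho>_def)
  also have "\<dots> = \<rho> ^ l / \<epsilon>\<^sup>2" using r by simp
  finally show ?thesis by (simp add: r_def \<rho>_def)
qed

lemma sgg_averaging_time:
  assumes "a0 \<noteq> avg_vec a0" and "1 \<le> l" and "0 < \<epsilon>" "\<epsilon> < 1"
    and "0 < lambda2 (W_bar E) - Min (sgg_beta E p a0 ` {1..l})"
    and "3 * ln (1 / \<epsilon>) / ln (1 / (lambda2 (W_bar E) - Min (sgg_beta E p a0 ` {1..l}))) \<le> real l"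
  shows "measure_pmf.prob (sgg_dist E p a0 l) {x. \<epsilon> \<le> norm (x - avg_vec a0) / norm (a0 - avg_vec a0)}
    \<le> \<epsilon>"
proof -
  have "0 \<le> Min (sgg_beta E p a0 ` {1..l})"
    using assms(2) sgg_beta_nonneg by (simp add: Min_ge_iff)
  then have "lambda2 (W_bar E) - Min (sgg_beta E p a0 ` {1..l}) < 1"
    using lambda2_W_bar_less_1[OF conn card_ge_2] by simp
  then show ?thesis
    using sgg_tail_bound[OF assms(1,3)] power_div_square_le_if_time_ge[OF assms(3,4,5) _ assms(6)]
    by (meson order.trans)
qed

end

theorem theorem3:
  fixes E :: "'n::finite \<Rightarrow> 'n \<Rightarrow> bool" and p :: real and a0 :: "real^'n"
  assumes "CARD('n) \<ge> 2" and "connected_graph E"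
    and "0 \<le> p" and "p \<le> 1" and "a0 \<noteq> avg_vec a0"
  shows "\<forall>l\<ge>1.
     sgg_beta E p a0 l \<ge> 0
   \<and> sgg_E E p a0 l \<le> (lambda2 (W_bar E) - sgg_beta E p a0 l) * sgg_E E p a0 (l - 1)
   \<and> sgg_E E p a0 l \<le> (norm (a0 - avg_vec a0))\<^sup>2 * (\<Prod>i=1..l. lambda2 (W_bar E) - sgg_beta E p a0 i)
   \<and> (norm (a0 - avg_vec a0))\<^sup>2 * (\<Prod>i=1..l. lambda2 (W_bar E) - sgg_beta E p a0 i)
       \<le> (norm (a0 - avg_vec a0))\<^sup>2 * (lambda2 (W_bar E) - Min (sgg_beta E p a0 ` {1..l})) ^ l
   \<and> (\<forall>\<epsilon>. 0 < \<epsilon> \<and> \<epsilon> < 1 \<longrightarrow>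
        measure_pmf.prob (sgg_dist E p a0 l)
          {x. norm (x - avg_vec a0) / norm (a0 - avg_vec a0) \<ge> \<epsilon>}
        \<le> (lambda2 (W_bar E) - Min (sgg_beta E p a0 ` {1..l})) ^ l / \<epsilon>\<^sup>2)
   \<and> (\<forall>\<epsilon>. 0 < \<epsilon> \<and> \<epsilon> < 1 \<and> lambda2 (W_bar E) - Min (sgg_beta E p a0 ` {1..l}) > 0
        \<and> real l \<ge> 3 * ln (1 / \<epsilon>) / ln (1 / (lambda2 (W_bar E) - Min (sgg_beta E p a0 ` {1..l})))
        \<longrightarrow> measure_pmf.prob (sgg_dist E p a0 l)
          {x. norm (x - avg_vec a0) / norm (a0 - avg_vec a0) \<ge> \<epsilon>} \<le> \<epsilon>)"
  using sgg_beta_nonneg[OF assms(2,1,3,4)] sgg_E_le_contraction[OF assms(2,1,3,4)]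
    sgg_E_le_prod[OF assms(2,1,3,4)] sgg_prod_le_power[OF assms(2,1,3,4)]
    sgg_tail_bound[OF assms(2,1,3,4,5)] sgg_averaging_time[OF assms(2,1,3,4,5)]
  by blast

end
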